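(* Let $n\ge r\ge1$, let $\mathcal{O}\subset\mathbb{R}^{n\times r}$ be an open set containing ${\rm St}(n,r)$, let $f:\mathcal{O}\to\mathbb{R}$ be continuously differentiable, and let $L_f$ be a Lipschitz constant of $f$ on ${\rm St}(n,r)$. Consider problem (P): $\min_{X\in\mathcal{S}_{+}^{n,r}}f(X)$, and suppose that, in the case $n>r>1$, each local minimizer of (P) has no zero rows. Then for every local minimizer $X^*$ of (P): 1. if $n=r$ or $n>r=1$, with $\kappa'>0$ a constant such that ${\rm dist}(Z,\mathcal{S}_{+}^{n,r})\le\kappa'{\rm dist}(Z,\mathbb{R}_{+}^{n\times r})$ for all $Z\in{\rm St}(n,r)$, there exists $\delta>0$ such that $f(X)-f(X^* )+\kappa'L_f\vartheta(X)\ge0$ for all $X\in{\rm St}(n,r)$ with $\|X-X^*\|_F\le\delta$; 2. if $n>r>1$, with $\kappa:=\frac{2.1\sqrt{r}[1+3r(n-r)]}{X^*_{i^*j^*}}$ ($X^*_{i^*j^*}$ the smallest nonzero entry of $X^*$), there exists $\delta>0$ such that for all $\epsilon\ge0$ and all $X\in\mathcal{F}_\epsilon:=\{X\in{\rm St}(n,r):\vartheta(X)=\epsilon\}$ with $\|X-X^*\|_F\le\delta$, $f(X)-f(X^* )+\kappa L_f\vartheta(X)\ge0$. Hence each local minimizer of (P) is a local minimizer of $\min_{X\in{\rm St}(n,r)}\{f(X)+\rho\vartheta(X)\}$ for every $\rho\ge\max(\kappa',\kappa)L_f$, and conversely, for any $\rho>0$, each local minimizer of $\min_{X\in{\rm St}(n,r)}\{f(X)+\rho\vartheta(X)\}$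 that is entrywise nonnegative is a local minimizer of (P).
   Context: ${\rm St}(n,r):=\{X\in\mathbb{R}^{n\times r}: X^\top X=I_r\}$, $\mathbb{R}_{+}^{n\times r}$ the entrywise nonnegative matrices, $\mathcal{S}_{+}^{n,r}:=\mathbb{R}_{+}^{n\times r}\cap{\rm St}(n,r)$, ${\rm dist}$ the Frobenius-norm distance, and $\vartheta(X):=\sum_{i,j}\max(0,-X_{ij})$. *)

theory Defs
  imports "HOL-Analysis.Analysis"
begin

text \<open>Matrices in R^{n x r} are represented as real^'r^'n: X $ i $ j is the (i,j) entry,
  rows indexed by 'n (n = CARD('n)), columns by 'r (r = CARD('r)).
  The norm on this type is the Frobenius norm.\<close>

definition Stiefel :: "(real^'r^'n) set" where
  "Stiefel = {X. transpose X ** X = mat 1}"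

definition nonneg_mats :: "(real^'r^'n) set" where
  "nonneg_mats = {X. \<forall>i j. 0 \<le> X $ i $ j}"

definition nonneg_Stiefel :: "(real^'r^'n) set" where
  "nonneg_Stiefel = nonneg_mats \<inter> Stiefel"

definition vartheta :: "real^'r^'n \<Rightarrow> real" where
  "vartheta X = (\<Sum>i\<in>UNIV. \<Sum>j\<in>UNIV. max 0 (- (X $ i $ j)))"

definition local_min_P :: "(real^'r^'n \<Rightarrow> real) \<Rightarrow> real^'r^'n \<Rightarrow> bool" where
  "local_min_P f X \<longleftrightarrow> X \<in> nonneg_Stiefel \<and>
     (\<exists>\<delta>>0. \<forall>Y\<in>nonneg_Stiefel. norm (Y - X) < \<delta> \<longrightarrow> f X \<le> f Y)"

definition local_min_pen :: "(real^'r^'n \<Rightarrow> real) \<Rightarrow> real \<Rightarrow> real^'r^'n \<Rightarrow> bool" where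
  "local_min_pen f \<rho> X \<longleftrightarrow> X \<in> Stiefel \<and>
     (\<exists>\<delta>>0. \<forall>Y\<in>Stiefel. norm (Y - X) < \<delta> \<longrightarrow> f X + \<rho> * vartheta X \<le> f Y + \<rho> * vartheta Y)"

definition has_zero_row :: "real^'r^'n \<Rightarrow> bool" where
  "has_zero_row X \<longleftrightarrow> (\<exists>i. \<forall>j. X $ i $ j = 0)"

definition min_nonzero_entry :: "real^'r^'n \<Rightarrow> real" where
  "min_nonzero_entry X = Min {X $ i $ j | i j. X $ i $ j \<noteq> 0}"

end

theory Submission
  imports Defs
begin

(* Let X on St(n,r) be close to Xs, and let Z be a point of S+ near Xs with ||X - Z|| <= c vartheta(X).
   Local minimality and the Lipschitz bound give f(X) - f(Xs) >= f(X) - f(Z) >= - c L vartheta(X).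
   In part 1 such a Z is the nearest point of S+, by the assumed error bound.  In part 2, Xs has
   a single positive entry Xs(i, g i) >= m in every row, with g onto and m the smallest nonzero
   entry.  Normalising the columns of the g-pattern part of X gives Z with ||X - Z|| <= 2 S, where
   S is the l1-mass of X off the pattern.  Since sum_i (sum_j X_ij)^2 = sum_ij X_ij^2 = r on
   St(n,r), the positive off-pattern entries, weighted by the large pattern entries, must be
   balanced by negative ones, whence m S <= 4 vartheta(X).  So c = 8/m works, and 8/m is below
   the kappa of the statement.  Only the Lipschitz continuity of f on St(n,r) is used. *)

lemma sum_UNIV_remove: "(\<Sum>j\<in>UNIV. h j) = h p + (\<Sum>j | j \<noteq> p. h (j::'a::finite))"
proof -
  have "UNIV - {p} = {j. j \<noteq> p}" by blast
  then show ?thesis using sum.remove[of UNIV p h] by simp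
qed

lemma sum_UNIV_partition: "(\<Sum>x\<in>UNIV. h x) = (\<Sum>x | P x. h x) + (\<Sum>x | \<not> P x. h (x::'a::finite))"
  using sum.If_cases[of UNIV P h h] by (simp add: Collect_neg_eq)

lemma square_sum_minus_sum_squares:
  fixes a :: "'a::finite \<Rightarrow> real"
  shows "(\<Sum>j\<in>UNIV. a j)\<^sup>2 - (\<Sum>j\<in>UNIV. (a j)\<^sup>2)
    = 2 * a p * (\<Sum>j | j \<noteq> p. a j) + (\<Sum>j | j \<noteq> p. a j)\<^sup>2 - (\<Sum>j | j \<noteq> p. (a j)\<^sup>2)"
  unfolding sum_UNIV_remove[of a p] sum_UNIV_remove[of "\<lambda>j. (a j)\<^sup>2" p]
  by (simp add: power2_eq_square algebra_simps)

lemma mult_pos_part_minus_neg_part_le: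
  fixes a b x :: real
  assumes "0 \<le> b" "b \<le> a" "a \<le> 1"
  shows "b * max 0 x - max 0 (- x) \<le> a * x"
proof (cases "0 \<le> x")
  case True
  then show ?thesis using assms by (simp add: mult_right_mono)
next
  case False
  have "(1 - a) * x \<le> 0" using assms False by (intro mult_nonneg_nonpos) auto
  then show ?thesis using False by (simp add: algebra_simps)
qed

lemma abs_entry_le_norm: "\<bar>(X::real^'r^'n) $ i $ j\<bar> \<le> norm X"
  using component_le_norm_cart[of "X $ i" j] Finite_Cartesian_Product.norm_nth_le[of X i] by linarith

lemma norm_le_sum_abs_entries: "norm (X::real^'r^'n) \<le> (\<Sum>i\<in>UNIV. \<Sum>j\<in>UNIV. \<bar>X $ i $ j\<bar>)"
proof -
  have "norm X \<le> (\<Sum>i\<in>UNIV. norm (X $ i))"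
    unfolding norm_vec_def by (rule L2_set_le_sum) simp
  also have "\<dots> \<le> (\<Sum>i\<in>UNIV. \<Sum>j\<in>UNIV. \<bar>X $ i $ j\<bar>)"
    by (intro sum_mono norm_le_l1_cart)
  finally show ?thesis .
qed

lemma Stiefel_iff: "(X::real^'r^'n) \<in> Stiefel \<longleftrightarrow>
   (\<forall>j k. (\<Sum>i\<in>UNIV. X $ i $ j * X $ i $ k) = (if j = k then 1 else 0))"
  by (auto simp: Stiefel_def vec_eq_iff matrix_matrix_mult_def transpose_def mat_def)

lemma Stiefel_sum_column_sq: "(X::real^'r^'n) \<in> Stiefel \<Longrightarrow> (\<Sum>i\<in>UNIV. (X $ i $ j)\<^sup>2) = 1"
  by (auto simp: Stiefel_iff power2_eq_square)

lemma Stiefel_abs_entry_le_1: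
  assumes "(X::real^'r^'n) \<in> Stiefel"
  shows "\<bar>X $ i $ j\<bar> \<le> 1"
proof -
  have "(X $ i $ j)\<^sup>2 \<le> (\<Sum>i\<in>UNIV. (X $ i $ j)\<^sup>2)"
    by (rule member_le_sum) auto
  then show ?thesis
    using Stiefel_sum_column_sq[OF assms] by (simp add: abs_square_le_1)
qed

lemma Stiefel_column_nonzero:
  assumes "(X::real^'r^'n) \<in> Stiefel"
  obtains i where "X $ i $ j \<noteq> 0"
proof -
  have "\<exists>i. X $ i $ j \<noteq> 0"
  proof (rule ccontr)
    assume "\<nexists>i. X $ i $ j \<noteq> 0"
    then show False using Stiefel_sum_column_sq[OF assms, of j] by simp
  qed
  with that show thesis by blast
qed

lemma Stiefel_sum_sq_entries:
  "(X::real^'r^'n) \<in> Stiefel \<Longrightarrow> (\<Sum>i\<in>UNIV. \<Sum>j\<in>UNIV. (X $ i $ j)\<^sup>2) = real CARD('r)"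
  by (subst sum.swap) (simp add: Stiefel_sum_column_sq)

lemma Stiefel_sum_sq_row_sums:
  assumes "(X::real^'r^'n) \<in> Stiefel"
  shows "(\<Sum>i\<in>UNIV. (\<Sum>j\<in>UNIV. X $ i $ j)\<^sup>2) = real CARD('r)"
proof -
  have "(\<Sum>i\<in>UNIV. (\<Sum>j\<in>UNIV. X $ i $ j)\<^sup>2)
      = (\<Sum>i\<in>UNIV. \<Sum>j\<in>UNIV. \<Sum>k\<in>UNIV. X $ i $ j * X $ i $ k)"
    by (simp add: power2_eq_square sum_product)
  also have "\<dots> = (\<Sum>j\<in>UNIV. \<Sum>k\<in>UNIV. \<Sum>i\<in>UNIV. X $ i $ j * X $ i $ k)"
    by (subst sum.swap) (simp add: sum.swap[of _ "UNIV::'n set"])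
  also have "\<dots> = real CARD('r)"
    using assms by (simp add: Stiefel_iff)
  finally show ?thesis .
qed

lemma closed_Stiefel: "closed (Stiefel :: (real^'r^'n) set)"
proof -
  have "Stiefel = {X::real^'r^'n. \<forall>j k. (\<Sum>i\<in>UNIV. X $ i $ j * X $ i $ k) = (if j = k then 1 else 0)}"
    using Stiefel_iff by blast
  also have "closed \<dots>"
    by (intro closed_Collect_all closed_Collect_eq continuous_intros)
  finally show ?thesis .
qed

lemma closed_nonneg_mats: "closed (nonneg_mats :: (real^'r^'n) set)"
  unfolding nonneg_mats_def
  by (intro closed_Collect_all closed_Collect_le continuous_intros)

lemma closed_nonneg_Stiefel: "closed (nonneg_Stiefel :: (real^'r^'n) set)"
  unfolding nonneg_Stiefel_def by (intro closed_Int closed_nonneg_mats closed_Stiefel)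

lemma vartheta_nonneg: "0 \<le> vartheta (X::real^'r^'n)"
  unfolding vartheta_def by (intro sum_nonneg) auto

lemma vartheta_eq_0: "(X::real^'r^'n) \<in> nonneg_mats \<Longrightarrow> vartheta X = 0"
  unfolding vartheta_def nonneg_mats_def by simp

lemma infdist_nonneg_mats_le_vartheta: "infdist (X::real^'r^'n) nonneg_mats \<le> vartheta X"
proof -
  define X_pos :: "real^'r^'n" where "X_pos = (\<chi> i j. max 0 (X $ i $ j))"
  have "X_pos \<in> nonneg_mats" by (simp add: X_pos_def nonneg_mats_def)
  then have "infdist X nonneg_mats \<le> norm (X - X_pos)"
    using infdist_le by (metis dist_norm)
  also have "\<dots> \<le> (\<Sum>i\<in>UNIV. \<Sum>j\<in>UNIV. \<bar>(X - X_pos) $ i $ j\<bar>)"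
    by (rule norm_le_sum_abs_entries)
  also have "\<dots> = vartheta X"
    unfolding vartheta_def X_pos_def by (intro sum.cong refl) auto
  finally show ?thesis .
qed

section \<open>Exact penalty from a nearby feasible point\<close>

lemma penalty_bound_via_feasible_point:
  fixes f :: "real^'r^'n \<Rightarrow> real"
  assumes Lf: "L-lipschitz_on Stiefel f" and X: "X \<in> Stiefel" and Z: "Z \<in> Stiefel"
    and fZ: "f Xs \<le> f Z" and XZ: "norm (X - Z) \<le> c * vartheta X"
  shows "0 \<le> f X - f Xs + c * L * vartheta X"
proof -
  have "f Z - f X \<le> L * norm (X - Z)"
    using lipschitz_onD[OF Lf X Z] by (simp add: dist_real_def dist_norm)
  also have "\<dots> \<le> L * (c * vartheta X)"
    using XZ lipschitz_on_nonneg[OF Lf] by (rule mult_left_mono)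
  finally show ?thesis using fZ by (simp add: algebra_simps)
qed

lemma local_min_pen_of_penalty_bound:
  fixes f :: "real^'r^'n \<Rightarrow> real"
  assumes Xs: "Xs \<in> nonneg_Stiefel"
    and bound: "\<exists>\<delta>>0. \<forall>X\<in>Stiefel. norm (X - Xs) \<le> \<delta> \<longrightarrow> 0 \<le> f X - f Xs + c * L * vartheta X"
    and "c * L \<le> \<rho>"
  shows "local_min_pen f \<rho> Xs"
proof -
  obtain \<delta> where "0 < \<delta>"
    and \<delta>: "\<forall>X\<in>Stiefel. norm (X - Xs) \<le> \<delta> \<longrightarrow> 0 \<le> f X - f Xs + c * L * vartheta X"
    using bound by blast
  have "f Xs + \<rho> * vartheta Xs \<le> f Y + \<rho> * vartheta Y"
    if "Y \<in> Stiefel" "norm (Y - Xs) < \<delta>" for Y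
  proof -
    have "0 \<le> f Y - f Xs + c * L * vartheta Y" using \<delta> that by simp
    moreover have "c * L * vartheta Y \<le> \<rho> * vartheta Y"
      using \<open>c * L \<le> \<rho>\<close> vartheta_nonneg by (rule mult_right_mono)
    moreover have "vartheta Xs = 0" using Xs by (simp add: nonneg_Stiefel_def vartheta_eq_0)
    ultimately show ?thesis by simp
  qed
  then show ?thesis
    using Xs \<open>0 < \<delta>\<close> unfolding local_min_pen_def nonneg_Stiefel_def by blast
qed

lemma local_min_P_of_local_min_pen:
  fixes f :: "real^'r^'n \<Rightarrow> real"
  assumes "local_min_pen f \<rho> X" and "X \<in> nonneg_mats"
  shows "local_min_P f X"
proof -
  obtain \<delta> where "X \<in> Stiefel" "0 < \<delta>"
    and min: "\<forall>Y\<in>Stiefel. norm (Y - X) < \<delta> \<longrightarrow> f X + \<rho> * vartheta X \<le> f Y + \<rho> * vartheta Y"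
    using assms(1) unfolding local_min_pen_def by blast
  then show ?thesis
    using assms(2) unfolding local_min_P_def nonneg_Stiefel_def
    by (intro conjI exI[of _ \<delta>] ballI impI) (auto simp: vartheta_eq_0)
qed

lemma penalty_bound_of_error_bound:
  fixes f :: "real^'r^'n \<Rightarrow> real"
  assumes Lf: "L-lipschitz_on Stiefel f" and Xs: "local_min_P f Xs" and "0 \<le> \<kappa>"
    and error_bound: "\<forall>Z::real^'r^'n\<in>Stiefel. infdist Z nonneg_Stiefel \<le> \<kappa> * infdist Z nonneg_mats"
  shows "\<exists>\<delta>>0. \<forall>X\<in>Stiefel. norm (X - Xs) \<le> \<delta> \<longrightarrow> 0 \<le> f X - f Xs + \<kappa> * L * vartheta X"
proof -
  obtain \<delta> where "0 < \<delta>" and min: "\<forall>Y\<in>nonneg_Stiefel. norm (Y - Xs) < \<delta> \<longrightarrow> f Xs \<le> f Y"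
    and Xs_feasible: "Xs \<in> nonneg_Stiefel"
    using Xs unfolding local_min_P_def by blast
  have "0 \<le> f X - f Xs + \<kappa> * L * vartheta X"
    if X: "X \<in> Stiefel" "norm (X - Xs) \<le> \<delta> / 3" for X
  proof -
    obtain Y where Y: "Y \<in> nonneg_Stiefel" and XY: "infdist X nonneg_Stiefel = dist X Y"
      using infdist_attains_inf[OF closed_nonneg_Stiefel, of X] Xs_feasible by blast
    have "norm (X - Y) \<le> norm (X - Xs)"
      using XY infdist_le[OF Xs_feasible, of X] by (simp add: dist_norm)
    moreover have "norm (Y - Xs) \<le> norm (X - Y) + norm (X - Xs)"
      using dist_triangle3[of Y Xs X] unfolding dist_norm .
    ultimately have "norm (Y - Xs) < \<delta>"
      using X(2) \<open>0 < \<delta>\<close> by linarith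
    then have "f Xs \<le> f Y" using min Y by blast
    have "norm (X - Y) = infdist X nonneg_Stiefel" using XY by (simp add: dist_norm)
    also have "\<dots> \<le> \<kappa> * infdist X nonneg_mats" using error_bound X(1) by blast
    also have "\<dots> \<le> \<kappa> * vartheta X"
      using infdist_nonneg_mats_le_vartheta \<open>0 \<le> \<kappa>\<close> by (rule mult_left_mono)
    finally have "norm (X - Y) \<le> \<kappa> * vartheta X" .
    show ?thesis
      using Y \<open>f Xs \<le> f Y\<close> \<open>norm (X - Y) \<le> \<kappa> * vartheta X\<close>
      by (intro penalty_bound_via_feasible_point[OF Lf X(1)]) (auto simp: nonneg_Stiefel_def)
  qed
  then show ?thesis using \<open>0 < \<delta>\<close> by (intro exI[of _ "\<delta> / 3"]) auto
qed

section \<open>Matrices with one nonzero entry per row\<close>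

definition pattern_matrix :: "('n \<Rightarrow> 'r) \<Rightarrow> ('n \<Rightarrow> real) \<Rightarrow> real^'r^'n" where
  "pattern_matrix g a = (\<chi> i. axis (g i) (a i))"

lemma pattern_matrix_nth: "pattern_matrix g a $ i $ j = (if j = g i then a i else 0)"
  by (simp add: pattern_matrix_def axis_def)

lemma norm_pattern_matrix:
  fixes g :: "'n::finite \<Rightarrow> 'r::finite"
  shows "norm (pattern_matrix g a) = L2_set a UNIV"
proof -
  have row: "norm (axis k x) = \<bar>x\<bar>" for k :: "'r::finite" and x :: real
  proof -
    have "axis k x = x *\<^sub>R axis k 1" by (simp add: axis_def vec_eq_iff)
    then show ?thesis by (metis norm_axis_1 norm_scaleR real_norm_def mult.right_neutral)
  qed
  have "norm (pattern_matrix g a) = L2_set (\<lambda>i. norm (axis (g i) (a i))) UNIV"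
    unfolding pattern_matrix_def by (subst norm_vec_def) simp
  with row show ?thesis by (simp add: L2_set_def)
qed

lemma pattern_matrix_diff:
  "pattern_matrix g a - pattern_matrix g b = pattern_matrix g (\<lambda>i. a i - b i)"
  by (simp add: vec_eq_iff pattern_matrix_nth)

lemma pattern_matrix_in_Stiefel:
  fixes g :: "'n::finite \<Rightarrow> 'r::finite"
  assumes "\<And>j. (\<Sum>i | g i = j. (a i)\<^sup>2) = 1"
  shows "pattern_matrix g a \<in> Stiefel"
  unfolding Stiefel_iff pattern_matrix_nth
proof (intro allI)
  fix j k :: 'r
  have "(\<Sum>i\<in>UNIV. (if j = g i then a i else 0) * (if k = g i then a i else 0))
      = (\<Sum>i\<in>UNIV. if j = k \<and> g i = j then (a i)\<^sup>2 else 0)"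
    by (intro sum.cong) (auto simp: power2_eq_square)
  also have "\<dots> = (if j = k then 1 else 0)"
    using assms by (simp add: sum.inter_filter[symmetric])
  finally show "(\<Sum>i\<in>UNIV. (if j = g i then a i else 0) * (if k = g i then a i else 0))
      = (if j = k then 1 else 0)" .
qed

lemma nonneg_Stiefel_pattern:
  fixes X :: "real^'r^'n"
  assumes "X \<in> nonneg_Stiefel" and "\<not> has_zero_row X"
  obtains g where "\<And>i. 0 < X $ i $ (g i)" "\<And>i j. j \<noteq> g i \<Longrightarrow> X $ i $ j = 0" "surj g"
proof -
  have St: "X \<in> Stiefel" and nonneg: "\<And>i j. 0 \<le> X $ i $ j"
    using assms(1) by (auto simp: nonneg_Stiefel_def nonneg_mats_def)
  have disjoint: "X $ i $ j = 0 \<or> X $ i $ k = 0" if "j \<noteq> k" for i j k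
  proof -
    have "(\<Sum>i\<in>UNIV. X $ i $ j * X $ i $ k) = 0" using St that by (simp add: Stiefel_iff)
    then have "X $ i $ j * X $ i $ k = 0"
      using sum_nonneg_eq_0_iff[of UNIV "\<lambda>i. X $ i $ j * X $ i $ k"] nonneg by simp
    then show ?thesis by simp
  qed
  define g where "g i = (SOME j. X $ i $ j \<noteq> 0)" for i
  have nonzero: "X $ i $ (g i) \<noteq> 0" for i
  proof -
    obtain j where "X $ i $ j \<noteq> 0" using assms(2) unfolding has_zero_row_def by blast
    then show ?thesis unfolding g_def by (rule someI)
  qed
  have pos: "0 < X $ i $ (g i)" for i
    using nonzero nonneg by (simp add: less_le)
  have off: "X $ i $ j = 0" if "j \<noteq> g i" for i j
    using disjoint[OF that, of i] nonzero[of i] by simp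
  have "\<exists>i. g i = j" for j
  proof -
    obtain i where "X $ i $ j \<noteq> 0" using Stiefel_column_nonzero[OF St] .
    then have "g i = j" using off[of j i] by force
    then show ?thesis by blast
  qed
  then have "surj g" by (metis surjI)
  with pos off show thesis by (rule that)
qed

definition off_pattern_mass :: "('n \<Rightarrow> 'r) \<Rightarrow> real^'r^'n \<Rightarrow> real" where
  "off_pattern_mass g X = (\<Sum>i\<in>UNIV. \<Sum>j | j \<noteq> g i. \<bar>X $ i $ j\<bar>)"

lemma off_pattern_mass_nonneg: "0 \<le> off_pattern_mass g X"
  unfolding off_pattern_mass_def by (intro sum_nonneg) auto

lemma off_pattern_mass_by_columns:
  fixes g :: "'n::finite \<Rightarrow> 'r::finite"
  shows "off_pattern_mass g X = (\<Sum>j\<in>UNIV. \<Sum>i | g i \<noteq> j. \<bar>X $ i $ j\<bar>)"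
proof -
  have "off_pattern_mass g X = (\<Sum>j\<in>UNIV. \<Sum>i | j \<noteq> g i. \<bar>X $ i $ j\<bar>)"
    unfolding off_pattern_mass_def
    using sum.swap_restrict[of UNIV UNIV "\<lambda>i j. \<bar>X $ i $ j\<bar>" "\<lambda>i j. j \<noteq> g i"] by simp
  also have "\<dots> = (\<Sum>j\<in>UNIV. \<Sum>i | g i \<noteq> j. \<bar>X $ i $ j\<bar>)"
    by (intro sum.cong) auto
  finally show ?thesis .
qed

lemma norm_diff_pattern_part_le:
  fixes X :: "real^'r^'n"
  shows "norm (X - pattern_matrix g (\<lambda>i. X $ i $ (g i))) \<le> off_pattern_mass g X"
proof -
  have "norm (X - pattern_matrix g (\<lambda>i. X $ i $ (g i)))
      \<le> (\<Sum>i\<in>UNIV. \<Sum>j\<in>UNIV. \<bar>(X - pattern_matrix g (\<lambda>i. X $ i $ (g i))) $ i $ j\<bar>)"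
    by (rule norm_le_sum_abs_entries)
  also have "\<dots> = (\<Sum>i\<in>UNIV. \<Sum>j\<in>UNIV. if j \<noteq> g i then \<bar>X $ i $ j\<bar> else 0)"
    by (intro sum.cong refl) (simp add: pattern_matrix_nth)
  also have "\<dots> = off_pattern_mass g X"
    unfolding off_pattern_mass_def by (simp add: sum.If_cases)
  finally show ?thesis .
qed

locale Stiefel_near_pattern =
  fixes X :: "real^'r^'n" and g :: "'n \<Rightarrow> 'r" and m d :: real
  assumes Stiefel: "X \<in> Stiefel" and surj: "surj g"
    and pattern_entry: "\<And>i. m - d \<le> X $ i $ (g i)"
    and off_pattern_entry: "\<And>i j. j \<noteq> g i \<Longrightarrow> \<bar>X $ i $ j\<bar> \<le> d"
    and m_pos: "0 < m" and d_nonneg: "0 \<le> d" and d_small: "4 * d \<le> m"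
begin

lemma m_minus_d_le_1: "m - d \<le> 1"
  using pattern_entry[of undefined] Stiefel_abs_entry_le_1[OF Stiefel, of undefined "g undefined"]
  by linarith

lemma off_pattern_sq_le: "j \<noteq> g i \<Longrightarrow> (X $ i $ j)\<^sup>2 \<le> d * \<bar>X $ i $ j\<bar>"
  using off_pattern_entry[of j i] mult_right_mono[of "\<bar>X $ i $ j\<bar>" d "\<bar>X $ i $ j\<bar>"]
  by (simp add: power2_eq_square abs_mult_self)

lemma off_pattern_mass_le_card: "off_pattern_mass g X \<le> real CARD('n) * real CARD('r) * d"
proof -
  have row_bound: "(\<Sum>j | j \<noteq> g i. \<bar>X $ i $ j\<bar>) \<le> real CARD('r) * d" for i
  proof -
    have "(\<Sum>j | j \<noteq> g i. \<bar>X $ i $ j\<bar>) \<le> (\<Sum>j | j \<noteq> g i. d)"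
      by (intro sum_mono off_pattern_entry) simp
    also have "\<dots> \<le> real CARD('r) * d"
      using card_mono[of UNIV "{j. j \<noteq> g i}"] d_nonneg by (simp add: mult_right_mono)
    finally show ?thesis .
  qed
  have "off_pattern_mass g X \<le> (\<Sum>i\<in>(UNIV::'n set). real CARD('r) * d)"
    unfolding off_pattern_mass_def by (intro sum_mono row_bound)
  then show ?thesis by simp
qed

lemma pattern_cross_sum_le:
  "2 * (\<Sum>i\<in>UNIV. X $ i $ (g i) * (\<Sum>j | j \<noteq> g i. X $ i $ j)) \<le> d * off_pattern_mass g X"
proof -
  define s where "s i = (\<Sum>j | j \<noteq> g i. X $ i $ j)" for i
  define q where "q i = (\<Sum>j | j \<noteq> g i. (X $ i $ j)\<^sup>2)" for i
  have "2 * (\<Sum>i\<in>UNIV. X $ i $ (g i) * s i) + (\<Sum>i\<in>UNIV. (s i)\<^sup>2) - (\<Sum>i\<in>UNIV. q i)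
      = (\<Sum>i\<in>UNIV. 2 * X $ i $ (g i) * s i + (s i)\<^sup>2 - q i)"
    by (simp add: sum.distrib sum_subtractf sum_distrib_left mult.assoc)
  also have "\<dots> = (\<Sum>i\<in>UNIV. (\<Sum>j\<in>UNIV. X $ i $ j)\<^sup>2 - (\<Sum>j\<in>UNIV. (X $ i $ j)\<^sup>2))"
  proof (intro sum.cong refl)
    fix i
    show "2 * X $ i $ (g i) * s i + (s i)\<^sup>2 - q i
        = (\<Sum>j\<in>UNIV. X $ i $ j)\<^sup>2 - (\<Sum>j\<in>UNIV. (X $ i $ j)\<^sup>2)"
      using square_sum_minus_sum_squares[of "\<lambda>j. X $ i $ j" "g i"] by (simp add: s_def q_def)
  qed
  also have "\<dots> = 0"
    using Stiefel_sum_sq_row_sums[OF Stiefel] Stiefel_sum_sq_entries[OF Stiefel]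
    by (simp add: sum_subtractf)
  finally have "2 * (\<Sum>i\<in>UNIV. X $ i $ (g i) * s i) \<le> (\<Sum>i\<in>UNIV. q i)"
    using sum_nonneg[of UNIV "\<lambda>i. (s i)\<^sup>2"] by simp
  also have "\<dots> \<le> (\<Sum>i\<in>UNIV. d * (\<Sum>j | j \<noteq> g i. \<bar>X $ i $ j\<bar>))"
    unfolding q_def sum_distrib_left by (intro sum_mono off_pattern_sq_le) simp
  also have "\<dots> = d * off_pattern_mass g X"
    by (simp add: off_pattern_mass_def sum_distrib_left)
  finally show ?thesis by (simp add: s_def)
qed

lemma off_pattern_mass_le_vartheta: "m * off_pattern_mass g X \<le> 4 * vartheta X"
proof -
  define P where "P = (\<Sum>i\<in>UNIV. \<Sum>j | j \<noteq> g i. max 0 (X $ i $ j))"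
  define Q where "Q = (\<Sum>i\<in>UNIV. \<Sum>j | j \<noteq> g i. max 0 (- X $ i $ j))"
  define T where "T = (\<Sum>i\<in>UNIV. X $ i $ (g i) * (\<Sum>j | j \<noteq> g i. X $ i $ j))"
  have "0 \<le> P" "0 \<le> Q" unfolding P_def Q_def by (auto intro!: sum_nonneg)
  have S: "off_pattern_mass g X = P + Q"
    unfolding off_pattern_mass_def P_def Q_def sum.distrib[symmetric]
    by (intro sum.cong refl) (simp add: max_def)
  have "Q \<le> vartheta X"
    unfolding Q_def vartheta_def by (intro sum_mono sum_mono2) auto
  have "(m - d) * max 0 (X $ i $ j) - max 0 (- X $ i $ j) \<le> X $ i $ (g i) * X $ i $ j" for i j
    using d_small m_pos pattern_entry[of i] Stiefel_abs_entry_le_1[OF Stiefel, of i "g i"]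
    by (intro mult_pos_part_minus_neg_part_le) auto
  then have "(m - d) * P - Q \<le> T"
    unfolding P_def Q_def T_def sum_distrib_left sum_subtractf[symmetric]
    by (intro sum_mono) auto
  moreover have "2 * T \<le> d * (P + Q)"
    using pattern_cross_sum_le S by (simp add: T_def)
  moreover have "4 * (d * P) \<le> m * P" "4 * (d * Q) \<le> m * Q"
    using d_small \<open>0 \<le> P\<close> \<open>0 \<le> Q\<close> by (simp_all add: mult_right_mono flip: mult.assoc)
  moreover have "3 * (m * Q) \<le> 4 * Q"
    using m_minus_d_le_1 d_small \<open>0 \<le> Q\<close> mult_right_mono[of "3 * m" 4 Q] by simp
  ultimately have "m * (P + Q) \<le> 4 * Q"
    using \<open>0 \<le> Q\<close> by (simp only: distrib_left left_diff_distrib)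
  then show ?thesis using S \<open>Q \<le> vartheta X\<close> by simp
qed

definition pattern_column_norm :: "'r \<Rightarrow> real" where
  "pattern_column_norm j = sqrt (\<Sum>i | g i = j. (X $ i $ j)\<^sup>2)"

lemma pattern_column_norm_ge: "m - d \<le> pattern_column_norm j"
proof -
  obtain i where "g i = j" using surj by (metis surjD)
  have "(X $ i $ j)\<^sup>2 \<le> (\<Sum>i | g i = j. (X $ i $ j)\<^sup>2)"
    by (rule member_le_sum) (auto simp: \<open>g i = j\<close>)
  then have "X $ i $ j \<le> pattern_column_norm j"
    unfolding pattern_column_norm_def by (rule real_le_rsqrt)
  then show ?thesis using pattern_entry[of i] \<open>g i = j\<close> by simp
qed

lemma pattern_column_norm_pos: "0 < pattern_column_norm j"
  using pattern_column_norm_ge[of j] m_pos d_small by linarith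

lemma one_minus_pattern_column_norm_bounds:
  "0 \<le> 1 - pattern_column_norm j"
  "1 - pattern_column_norm j \<le> d * (\<Sum>i | g i \<noteq> j. \<bar>X $ i $ j\<bar>)"
proof -
  let ?c = "pattern_column_norm j"
  have split: "(\<Sum>i | g i = j. (X $ i $ j)\<^sup>2) + (\<Sum>i | g i \<noteq> j. (X $ i $ j)\<^sup>2) = 1"
    using Stiefel_sum_column_sq[OF Stiefel, of j]
      sum_UNIV_partition[of "\<lambda>i. (X $ i $ j)\<^sup>2" "\<lambda>i. g i = j"] by simp
  have "0 \<le> (\<Sum>i | g i \<noteq> j. (X $ i $ j)\<^sup>2)" by (rule sum_nonneg) simp
  with split have "?c \<le> 1" unfolding pattern_column_norm_def by simp
  have c_sq: "?c\<^sup>2 = 1 - (\<Sum>i | g i \<noteq> j. (X $ i $ j)\<^sup>2)"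
    using split unfolding pattern_column_norm_def by (simp add: sum_nonneg)
  from \<open>?c \<le> 1\<close> show "0 \<le> 1 - ?c" by simp
  have "1 - ?c \<le> (1 - ?c) * (1 + ?c)"
    using mult_left_mono[of 1 "1 + ?c" "1 - ?c"] \<open>?c \<le> 1\<close> pattern_column_norm_pos[of j]
    by simp
  also have "\<dots> = (\<Sum>i | g i \<noteq> j. (X $ i $ j)\<^sup>2)"
    using c_sq by (simp add: power2_eq_square algebra_simps)
  also have "\<dots> \<le> (\<Sum>i | g i \<noteq> j. d * \<bar>X $ i $ j\<bar>)"
    by (intro sum_mono off_pattern_sq_le) auto
  finally show "1 - ?c \<le> d * (\<Sum>i | g i \<noteq> j. \<bar>X $ i $ j\<bar>)"
    by (simp add: sum_distrib_left)
qed

definition normalized_pattern_part :: "real^'r^'n" where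
  "normalized_pattern_part = pattern_matrix g (\<lambda>i. X $ i $ (g i) / pattern_column_norm (g i))"

lemma normalized_pattern_part_in_nonneg_Stiefel: "normalized_pattern_part \<in> nonneg_Stiefel"
proof -
  have "0 \<le> X $ i $ (g i) / pattern_column_norm (g i)" for i
    using pattern_entry[of i] pattern_column_norm_pos[of "g i"] m_pos d_small by simp
  then have "normalized_pattern_part \<in> nonneg_mats"
    by (simp add: normalized_pattern_part_def nonneg_mats_def pattern_matrix_nth)
  moreover have "normalized_pattern_part \<in> Stiefel"
    unfolding normalized_pattern_part_def
  proof (rule pattern_matrix_in_Stiefel)
    fix j
    have "(\<Sum>i | g i = j. (X $ i $ (g i) / pattern_column_norm (g i))\<^sup>2)
        = (\<Sum>i | g i = j. (X $ i $ j)\<^sup>2) / (pattern_column_norm j)\<^sup>2"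
      by (simp add: sum_divide_distrib power_divide)
    also have "\<dots> = 1"
      using pattern_column_norm_pos[of j] unfolding pattern_column_norm_def
      by (simp add: sum_nonneg)
    finally show "(\<Sum>i | g i = j. (X $ i $ (g i) / pattern_column_norm (g i))\<^sup>2) = 1" .
  qed
  ultimately show ?thesis by (simp add: nonneg_Stiefel_def)
qed

lemma norm_pattern_part_minus_normalized_le:
  "norm (pattern_matrix g (\<lambda>i. X $ i $ (g i)) - normalized_pattern_part) \<le> d * off_pattern_mass g X"
proof -
  let ?c = pattern_column_norm
  have "(\<Sum>i\<in>UNIV. (X $ i $ (g i) - X $ i $ (g i) / ?c (g i))\<^sup>2)
      = (\<Sum>j\<in>UNIV. \<Sum>i | g i = j. (X $ i $ j)\<^sup>2 * (1 - 1 / ?c j)\<^sup>2)"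
    by (subst sum.group[of UNIV UNIV g, symmetric]) (auto simp: power2_eq_square algebra_simps intro!: sum.cong)
  also have "\<dots> = (\<Sum>j\<in>UNIV. (?c j - 1)\<^sup>2)"
  proof (intro sum.cong refl)
    fix j
    have "(\<Sum>i | g i = j. (X $ i $ j)\<^sup>2 * (1 - 1 / ?c j)\<^sup>2) = (?c j)\<^sup>2 * (1 - 1 / ?c j)\<^sup>2"
      unfolding sum_distrib_right[symmetric] pattern_column_norm_def by (simp add: sum_nonneg)
    also have "\<dots> = (?c j - 1)\<^sup>2"
      using pattern_column_norm_pos[of j] by (simp add: power2_eq_square field_simps)
    finally show "(\<Sum>i | g i = j. (X $ i $ j)\<^sup>2 * (1 - 1 / ?c j)\<^sup>2) = (?c j - 1)\<^sup>2" .
  qed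
  finally have "norm (pattern_matrix g (\<lambda>i. X $ i $ (g i)) - normalized_pattern_part)
      = L2_set (\<lambda>j. ?c j - 1) UNIV"
    by (simp add: normalized_pattern_part_def pattern_matrix_diff norm_pattern_matrix L2_set_def)
  also have "\<dots> \<le> (\<Sum>j\<in>UNIV. \<bar>?c j - 1\<bar>)" by (rule L2_set_le_sum_abs)
  also have "\<dots> \<le> (\<Sum>j\<in>UNIV. d * (\<Sum>i | g i \<noteq> j. \<bar>X $ i $ j\<bar>))"
  proof (intro sum_mono)
    fix j
    have "\<bar>?c j - 1\<bar> = 1 - ?c j" using one_minus_pattern_column_norm_bounds(1)[of j] by simp
    then show "\<bar>?c j - 1\<bar> \<le> d * (\<Sum>i | g i \<noteq> j. \<bar>X $ i $ j\<bar>)"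
      using one_minus_pattern_column_norm_bounds(2)[of j] by linarith
  qed
  also have "\<dots> = d * off_pattern_mass g X"
    by (simp add: off_pattern_mass_by_columns sum_distrib_left)
  finally show ?thesis .
qed

lemma exists_nonneg_Stiefel_near:
  "\<exists>Z\<in>nonneg_Stiefel. norm (X - Z) \<le> 2 * off_pattern_mass g X \<and> norm (X - Z) \<le> 8 / m * vartheta X"
proof (intro bexI conjI)
  have "d * off_pattern_mass g X \<le> off_pattern_mass g X"
    using m_minus_d_le_1 d_small d_nonneg off_pattern_mass_nonneg
    by (intro mult_left_le_one_le) auto
  then show close: "norm (X - normalized_pattern_part) \<le> 2 * off_pattern_mass g X"
    using norm_diff_triangle_le[OF norm_diff_pattern_part_le norm_pattern_part_minus_normalized_le]
    by simp
  have "m * norm (X - normalized_pattern_part) \<le> 2 * (m * off_pattern_mass g X)"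
    using mult_left_mono[OF close, of m] m_pos by (simp add: mult.left_commute)
  then have "m * norm (X - normalized_pattern_part) \<le> 8 * vartheta X"
    using off_pattern_mass_le_vartheta by linarith
  then show "norm (X - normalized_pattern_part) \<le> 8 / m * vartheta X"
    using m_pos by (simp add: field_simps)
qed (rule normalized_pattern_part_in_nonneg_Stiefel)

end

lemma Stiefel_near_pattern_if_close:
  fixes X Xs :: "real^'r^'n"
  assumes "X \<in> Stiefel" "surj g" and pattern: "\<And>i. m \<le> Xs $ i $ (g i)"
    and off_pattern: "\<And>i j. j \<noteq> g i \<Longrightarrow> Xs $ i $ j = 0"
    and close: "norm (X - Xs) \<le> d" and "0 < m" "4 * d \<le> m"
  shows "Stiefel_near_pattern X g m d"
proof
  have entry: "\<bar>X $ i $ j - Xs $ i $ j\<bar> \<le> d" for i j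
    using abs_entry_le_norm[of "X - Xs" i j] close by simp
  show "m - d \<le> X $ i $ (g i)" for i using entry[of i "g i"] pattern[of i] by linarith
  show "\<bar>X $ i $ j\<bar> \<le> d" if "j \<noteq> g i" for i j using entry[of i j] off_pattern[OF that] by simp
  show "0 \<le> d" using norm_ge_zero close by (rule order_trans)
qed fact+

lemma finite_nonzero_entries: "finite {X $ i $ j | i j. X $ i $ j \<noteq> (0::real)}"
proof (rule finite_subset)
  show "{X $ i $ j | i j. X $ i $ j \<noteq> 0} \<subseteq> (\<lambda>(i, j). X $ i $ j) ` UNIV" by auto
qed simp

lemma min_nonzero_entry_le: "(X::real^'r^'n) $ i $ j \<noteq> 0 \<Longrightarrow> min_nonzero_entry X \<le> X $ i $ j"
  unfolding min_nonzero_entry_def by (rule Min_le[OF finite_nonzero_entries]) blast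

lemma min_nonzero_entry_pos:
  assumes "(X::real^'r^'n) \<in> nonneg_Stiefel"
  shows "0 < min_nonzero_entry X"
proof -
  have "X \<in> Stiefel" using assms by (simp add: nonneg_Stiefel_def)
  then obtain i j where "X $ i $ j \<noteq> 0" by (rule Stiefel_column_nonzero)
  then have "min_nonzero_entry X \<in> {X $ i $ j | i j. X $ i $ j \<noteq> 0}"
    unfolding min_nonzero_entry_def by (intro Min_in finite_nonzero_entries) blast
  then show ?thesis using assms by (auto simp: nonneg_Stiefel_def nonneg_mats_def less_le)
qed

lemma penalty_bound_of_no_zero_row:
  fixes f :: "real^'r^'n \<Rightarrow> real"
  assumes Lf: "L-lipschitz_on Stiefel f" and Xs: "local_min_P f Xs"
    and "\<not> has_zero_row Xs" and \<kappa>: "8 / min_nonzero_entry Xs \<le> \<kappa>"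
  shows "\<exists>\<delta>>0. \<forall>X\<in>Stiefel. norm (X - Xs) \<le> \<delta> \<longrightarrow> 0 \<le> f X - f Xs + \<kappa> * L * vartheta X"
proof -
  obtain \<delta>\<^sub>0 where "0 < \<delta>\<^sub>0" and min: "\<forall>Y\<in>nonneg_Stiefel. norm (Y - Xs) < \<delta>\<^sub>0 \<longrightarrow> f Xs \<le> f Y"
    and Xs_feasible: "Xs \<in> nonneg_Stiefel"
    using Xs unfolding local_min_P_def by blast
  obtain g where g_pos: "\<And>i. 0 < Xs $ i $ (g i)" and g_off: "\<And>i j. j \<noteq> g i \<Longrightarrow> Xs $ i $ j = 0"
    and "surj g"
    using nonneg_Stiefel_pattern[OF Xs_feasible \<open>\<not> has_zero_row Xs\<close>] by blast
  define m where "m = min_nonzero_entry Xs"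
  have m_le: "m \<le> Xs $ i $ (g i)" for i
    using g_pos[of i] min_nonzero_entry_le[of Xs i "g i"] unfolding m_def by simp
  have "0 < m"
    using Xs_feasible unfolding m_def by (rule min_nonzero_entry_pos)
  define N where "N = 2 * real CARD('n) * real CARD('r) + 2"
  define \<delta> where "\<delta> = min (m / 4) (\<delta>\<^sub>0 / N)"
  have "0 < N" by (simp add: N_def add_pos_nonneg)
  then have "0 < \<delta>" using \<open>0 < m\<close> \<open>0 < \<delta>\<^sub>0\<close> by (simp add: \<delta>_def)
  have "4 * \<delta> \<le> m" and "N * \<delta> \<le> \<delta>\<^sub>0"
    using \<open>0 < N\<close> by (simp_all add: \<delta>_def min_def field_simps)
  have "0 \<le> f X - f Xs + \<kappa> * L * vartheta X" if X: "X \<in> Stiefel" "norm (X - Xs) \<le> \<delta>" for X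
  proof -
    interpret Stiefel_near_pattern X g m \<delta>
      by (rule Stiefel_near_pattern_if_close) fact+
    obtain Z where Z: "Z \<in> nonneg_Stiefel" and XZ: "norm (X - Z) \<le> 2 * off_pattern_mass g X"
      and "norm (X - Z) \<le> 8 / m * vartheta X"
      using exists_nonneg_Stiefel_near by blast
    have "norm (Z - Xs) \<le> norm (X - Z) + norm (X - Xs)"
      using dist_triangle3[of Z Xs X] unfolding dist_norm .
    also have "\<dots> < N * \<delta>"
      using XZ X(2) off_pattern_mass_le_card \<open>0 < \<delta>\<close> by (simp add: N_def algebra_simps)
    also have "\<dots> \<le> \<delta>\<^sub>0" by fact
    finally have "f Xs \<le> f Z" using min Z by blast
    have "norm (X - Z) \<le> \<kappa> * vartheta X"
      using \<open>norm (X - Z) \<le> 8 / m * vartheta X\<close> mult_right_mono[OF \<kappa> vartheta_nonneg[of X]]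
      unfolding m_def by linarith
    with Z \<open>f Xs \<le> f Z\<close> show ?thesis
      by (intro penalty_bound_via_feasible_point[OF Lf X(1)]) (auto simp: nonneg_Stiefel_def)
  qed
  then show ?thesis using \<open>0 < \<delta>\<close> by blast
qed

lemma eight_le_penalty_numerator:
  fixes r n :: real
  assumes "1 \<le> r" and "r + 1 \<le> n"
  shows "8 \<le> 21 / 10 * sqrt r * (1 + 3 * r * (n - r))"
proof -
  have "1 * 1 \<le> r * (n - r)" using assms by (intro mult_mono) auto
  then have "1 * 4 \<le> sqrt r * (1 + 3 * r * (n - r))"
    using assms by (intro mult_mono) auto
  then show ?thesis by linarith
qed

theorem corollary3p7:
  fixes f :: "real^'r^'n \<Rightarrow> real" and Om :: "(real^'r^'n) set" and L :: real
  assumes dims: "CARD('r) \<le> CARD('n)"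
    and O_open: "open Om" and St_sub: "Stiefel \<subseteq> Om"
    and f_C1: "\<exists>f'. (\<forall>x\<in>Om. (f has_derivative blinfun_apply (f' x)) (at x)) \<and> continuous_on Om f'"
    and Lf: "L-lipschitz_on Stiefel f"
    and no_zero_rows: "CARD('n) > CARD('r) \<and> CARD('r) > 1 \<Longrightarrow>
                         (\<forall>X. local_min_P f X \<longrightarrow> \<not> has_zero_row X)"
    and Xs: "local_min_P f Xs"
  shows
    "((CARD('n) = CARD('r) \<or> (CARD('n) > CARD('r) \<and> CARD('r) = 1)) \<longrightarrow>
       (\<forall>\<kappa>'>0. (\<forall>Z::real^'r^'n\<in>Stiefel. infdist Z nonneg_Stiefel \<le> \<kappa>' * infdist Z nonneg_mats) \<longrightarrow>
          (\<exists>\<delta>>0. \<forall>X\<in>Stiefel. norm (X - Xs) \<le> \<delta> \<longrightarrow>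
              f X - f Xs + \<kappa>' * L * vartheta X \<ge> 0)
          \<and> (\<forall>\<rho>\<ge>\<kappa>' * L. local_min_pen f \<rho> Xs)))
   \<and> ((CARD('n) > CARD('r) \<and> CARD('r) > 1) \<longrightarrow>
       (let \<kappa> = (21/10) * sqrt (real CARD('r)) * (1 + 3 * real CARD('r) * (real CARD('n) - real CARD('r)))
                  / min_nonzero_entry Xs in
         (\<exists>\<delta>>0. \<forall>\<epsilon>\<ge>0. \<forall>X. X \<in> Stiefel \<and> vartheta X = \<epsilon> \<and> norm (X - Xs) \<le> \<delta> \<longrightarrow>
              f X - f Xs + \<kappa> * L * vartheta X \<ge> 0)
         \<and> (\<forall>\<rho>\<ge>\<kappa> * L. local_min_pen f \<rho> Xs)))
   \<and> (\<forall>\<rho>>0. \<forall>X. local_min_pen f \<rho> X \<and> X \<in> nonneg_mats \<longrightarrow> local_min_P f X)"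
proof -
  define \<kappa> where "\<kappa> = (21/10) * sqrt (real CARD('r))
    * (1 + 3 * real CARD('r) * (real CARD('n) - real CARD('r))) / min_nonzero_entry Xs"
  have Xs_feasible: "Xs \<in> nonneg_Stiefel" using Xs by (simp add: local_min_P_def)
  have \<kappa>_ge: "8 / min_nonzero_entry Xs \<le> \<kappa>" if "CARD('r) < CARD('n)"
    unfolding \<kappa>_def using eight_le_penalty_numerator min_nonzero_entry_pos[OF Xs_feasible] that
    by (intro divide_right_mono) auto
  show ?thesis
    unfolding Let_def \<kappa>_def[symmetric]
  proof (intro conjI impI allI)
    fix \<kappa>' :: real
    assume "0 < \<kappa>'"
      and "\<forall>Z::real^'r^'n\<in>Stiefel. infdist Z nonneg_Stiefel \<le> \<kappa>' * infdist Z nonneg_mats"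
    then show bound:
      "\<exists>\<delta>>0. \<forall>X\<in>Stiefel. norm (X - Xs) \<le> \<delta> \<longrightarrow> 0 \<le> f X - f Xs + \<kappa>' * L * vartheta X"
      by (intro penalty_bound_of_error_bound[OF Lf Xs]) simp_all
    show "local_min_pen f \<rho> Xs" if "\<kappa>' * L \<le> \<rho>" for \<rho>
      using Xs_feasible bound that by (rule local_min_pen_of_penalty_bound)
  next
    assume "CARD('n) > CARD('r) \<and> CARD('r) > 1"
    then have bound:
      "\<exists>\<delta>>0. \<forall>X\<in>Stiefel. norm (X - Xs) \<le> \<delta> \<longrightarrow> 0 \<le> f X - f Xs + \<kappa> * L * vartheta X"
      using no_zero_rows Xs \<kappa>_ge by (intro penalty_bound_of_no_zero_row[OF Lf Xs]) auto
    then show "\<exists>\<delta>>0. \<forall>\<epsilon>\<ge>0. \<forall>X. X \<in> Stiefel \<and> vartheta X = \<epsilon> \<and> norm (X - Xs) \<le> \<delta> \<longrightarrow>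
        0 \<le> f X - f Xs + \<kappa> * L * vartheta X"
      by blast
    show "local_min_pen f \<rho> Xs" if "\<kappa> * L \<le> \<rho>" for \<rho>
      using Xs_feasible bound that by (rule local_min_pen_of_penalty_bound)
  next
    show "local_min_P f X" if "local_min_pen f \<rho> X \<and> X \<in> nonneg_mats" for \<rho> X
      using that local_min_P_of_local_min_pen by blast
  qed
qed

end
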